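(* Consider $R_0(s)=\int_0^{\bar\theta}J(\theta)s(\theta)\,dF(\theta)$. The following are equivalent: (a) $J$ is nondecreasing on $\Theta$; (b) for all nondecreasing $s,\hat s:\Theta\to[0,1]$ with $\hat s\in\mathrm{MPS}(s)$, $R_0(s)\ge R_0(\hat s)$ (offering more positional-good levels, i.e., a finer allocation, always weakly increases revenue); (c) full separation $s=F$ maximizes $R_0$ over $\mathcal S(0)$.
   Context: Let $0<\bar\theta<\infty$, $\Theta=[0,\bar\theta]$, $F$ a cdf on $\Theta$ with continuous, strictly positive density $f$, $dF=f\,d\theta$, and $J(\theta)=\theta-\frac{1-F(\theta)}{f(\theta)}$. For bounded measurable $a,b$ on $\Theta$, write $b\in\mathrm{MPS}(a)$ if $\int_x^{\bar\theta}b\,dF\le\int_x^{\bar\theta}a\,dF$ for all $x\in\Theta$, with equality at $x=0$. $\mathcal S(0)$ is the set of nondecreasing $s:\Theta\to[0,1]$ with $s\in\mathrm{MPS}(F)$ (feasible interim statuses when exclusion is impossible and the lowest level is free). $R_0(s)$ is the seller's revenue in this setting. *)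

theory Defs
  imports "HOL-Analysis.Analysis"
begin

text \<open>Type space Theta = [0, tb]; density f; integrals w.r.t. dF = f d theta are
  Henstock-Kurzweil integrals of (g * f) over subintervals of Theta.\<close>

definition virt_val :: "(real \<Rightarrow> real) \<Rightarrow> (real \<Rightarrow> real) \<Rightarrow> real \<Rightarrow> real" where
  "virt_val F f \<theta> = \<theta> - (1 - F \<theta>) / f \<theta>"

text \<open>b \<in> MPS(a): upper tail integrals of b w.r.t. dF are dominated by those of a,
  with equality at x = 0.\<close>
definition MPS :: "real \<Rightarrow> (real \<Rightarrow> real) \<Rightarrow> (real \<Rightarrow> real) \<Rightarrow> (real \<Rightarrow> real) \<Rightarrow> bool" where
  "MPS tb f b a \<longleftrightarrow>
     (\<forall>x\<in>{0..tb}. integral {x..tb} (\<lambda>t. b t * f t) \<le> integral {x..tb} (\<lambda>t. a t * f t)) \<and>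
     integral {0..tb} (\<lambda>t. b t * f t) = integral {0..tb} (\<lambda>t. a t * f t)"

definition status_fn :: "real \<Rightarrow> (real \<Rightarrow> real) \<Rightarrow> bool" where
  "status_fn tb s \<longleftrightarrow> mono_on {0..tb} s \<and> (\<forall>t\<in>{0..tb}. 0 \<le> s t \<and> s t \<le> 1)"

definition S0 :: "real \<Rightarrow> (real \<Rightarrow> real) \<Rightarrow> (real \<Rightarrow> real) \<Rightarrow> (real \<Rightarrow> real) set" where
  "S0 tb F f = {s. status_fn tb s \<and> MPS tb f s F}"

definition R0 :: "real \<Rightarrow> (real \<Rightarrow> real) \<Rightarrow> (real \<Rightarrow> real) \<Rightarrow> (real \<Rightarrow> real) \<Rightarrow> real" where
  "R0 tb F f s = integral {0..tb} (\<lambda>t. virt_val F f t * s t * f t)"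

end

theory Submission
  imports Defs
begin

text \<open>For \<open>s' \<in> MPS(s)\<close> the function \<open>h = (s - s') f\<close> has nonnegative upper tails and total
  integral zero, so by the second mean value theorem \<open>R\<^sub>0(s) - R\<^sub>0(s') = \<integral> J h\<close> equals
  \<open>(J(tb) - J(0)) \<cdot> \<integral>\<^sub>c\<^sup>t\<^sup>b h \<ge> 0\<close> for some \<open>c\<close> whenever \<open>J\<close> is nondecreasing; taking
  \<open>s = F\<close> gives optimality of full separation. Conversely, if \<open>J(x) > J(y)\<close> for some \<open>x < y\<close>,
  move a little status from types near \<open>y\<close> to types near \<open>x\<close> by adding
  \<open>\<epsilon> (b\<^sub>x - b\<^sub>y)\<close> to \<open>F\<close>, where \<open>b\<^sub>c\<close> is a tent at \<open>c\<close> of unit \<open>dF\<close>-mass. Since the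
  added mass lies left of the removed mass the result is in \<open>MPS(F)\<close>, for small \<open>\<epsilon>\<close> it stays
  nondecreasing, and by continuity of \<open>J\<close> its revenue exceeds that of \<open>F\<close>.\<close>

lemma mono_on_atLeastAtMostD:
  fixes g :: "'a::preorder \<Rightarrow> 'b::ord"
  assumes "mono_on {a..b} g" "a \<le> x" "x \<le> y" "y \<le> b"
  shows "g x \<le> g y"
  using assms(2-4) by (intro mono_onD[OF assms(1)]) (auto intro: order_trans)

lemma mono_on_times_integrable:
  fixes g h :: "real \<Rightarrow> real"
  assumes g: "mono_on {a..b} g" and h: "h integrable_on {a..b}"
  shows "(\<lambda>x. g x * h x) integrable_on {a..b}"
proof (cases "a \<le> b")
  case True
  obtain c where "c \<in> {a..b}"
    and "((\<lambda>x. g x * h x) has_integral (g a * integral {a..c} h + g b * integral {c..b} h)) {a..b}"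
    using second_mean_value_theorem_full[OF h True mono_on_atLeastAtMostD[OF g]] .
  then show ?thesis
    by (rule_tac has_integral_integrable)
qed auto

lemma integral_mono_times_nonneg_tails:
  fixes g h :: "real \<Rightarrow> real"
  assumes "a \<le> b" and g: "mono_on {a..b} g" and h: "h integrable_on {a..b}"
    and tails: "\<And>x. x \<in> {a..b} \<Longrightarrow> 0 \<le> integral {x..b} h"
    and total: "integral {a..b} h = 0"
  shows "0 \<le> integral {a..b} (\<lambda>x. g x * h x)"
proof -
  obtain c where c: "c \<in> {a..b}"
    and "integral {a..b} (\<lambda>x. g x * h x) = g a * integral {a..c} h + g b * integral {c..b} h"
    using second_mean_value_theorem[OF h \<open>a \<le> b\<close> mono_on_atLeastAtMostD[OF g]] .
  moreover have "integral {a..c} h + integral {c..b} h = integral {a..b} h"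
    using c h by (intro Henstock_Kurzweil_Integration.integral_combine) auto
  then have "integral {a..c} h = - integral {c..b} h"
    using total by simp
  ultimately have "integral {a..b} (\<lambda>x. g x * h x) = (g b - g a) * integral {c..b} h"
    by (simp add: left_diff_distrib)
  moreover have "g a \<le> g b"
    using mono_on_atLeastAtMostD[OF g] \<open>a \<le> b\<close> by simp
  ultimately show ?thesis
    using tails[OF c] by simp
qed

lemma MPS_weighted_integral_le:
  fixes J s s' f :: "real \<Rightarrow> real"
  assumes "0 \<le> tb" and J: "mono_on {0..tb} J"
    and s: "mono_on {0..tb} s" and s': "mono_on {0..tb} s'"
    and f: "continuous_on {0..tb} f" and mps: "MPS tb f s' s"
  shows "integral {0..tb} (\<lambda>t. J t * (s' t * f t)) \<le> integral {0..tb} (\<lambda>t. J t * (s t * f t))"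
proof -
  have int: "(\<lambda>t. r t * f t) integrable_on {z..tb}" if "mono_on {0..tb} r" "z \<in> {0..tb}" for r z
    using that by (intro mono_on_times_integrable integrable_continuous_interval
        mono_on_subset[OF that(1)] continuous_on_subset[OF f]) auto
  define h where "h t = s t * f t - s' t * f t" for t
  have tail: "integral {z..tb} h = integral {z..tb} (\<lambda>t. s t * f t) - integral {z..tb} (\<lambda>t. s' t * f t)"
    if "z \<in> {0..tb}" for z
    unfolding h_def using int[OF s that] int[OF s' that] by (rule integral_diff)
  have h_int: "h integrable_on {0..tb}"
    unfolding h_def using int[OF s] int[OF s'] \<open>0 \<le> tb\<close> by (intro integrable_diff) auto
  have "0 \<le> integral {z..tb} h" if "z \<in> {0..tb}" for z
    using mps that tail[OF that] unfolding MPS_def by simp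
  moreover have "integral {0..tb} h = 0"
    using mps tail \<open>0 \<le> tb\<close> unfolding MPS_def by simp
  ultimately have "0 \<le> integral {0..tb} (\<lambda>t. J t * h t)"
    by (intro integral_mono_times_nonneg_tails[OF \<open>0 \<le> tb\<close> J h_int])
  also have "integral {0..tb} (\<lambda>t. J t * h t)
      = integral {0..tb} (\<lambda>t. J t * (s t * f t)) - integral {0..tb} (\<lambda>t. J t * (s' t * f t))"
    unfolding h_def right_diff_distrib using int[OF s] int[OF s'] \<open>0 \<le> tb\<close>
    by (intro integral_diff mono_on_times_integrable[OF J]) auto
  finally show ?thesis by simp
qed

definition tent :: "real \<Rightarrow> real \<Rightarrow> real \<Rightarrow> real" where
  "tent c \<delta> t = max 0 (\<delta> - \<bar>t - c\<bar>)"

lemma continuous_on_tent: "continuous_on S (tent c \<delta>)"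
  unfolding tent_def by (intro continuous_intros)

lemma tent_nonneg: "0 \<le> tent c \<delta> t"
  by (simp add: tent_def)

lemma tent_eq_0: "\<delta> \<le> \<bar>t - c\<bar> \<Longrightarrow> tent c \<delta> t = 0"
  by (simp add: tent_def)

lemma tent_center: "tent c \<delta> c = max 0 \<delta>"
  by (simp add: tent_def)

lemma tent_lipschitz: "\<bar>tent c \<delta> v - tent c \<delta> u\<bar> \<le> \<bar>v - u\<bar>"
  by (auto simp: tent_def max_def abs_if)

lemma mono_on_add_lipschitz:
  fixes g q :: "real \<Rightarrow> real"
  assumes g: "\<And>u v. a \<le> u \<Longrightarrow> u \<le> v \<Longrightarrow> v \<le> b \<Longrightarrow> m * (v - u) \<le> g v - g u"
    and q: "\<And>u v. \<bar>q v - q u\<bar> \<le> m * \<bar>v - u\<bar>"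
  shows "mono_on {a..b} (\<lambda>t. g t + q t)"
proof (rule mono_onI)
  fix u v assume "u \<in> {a..b}" "v \<in> {a..b}" "u \<le> v"
  then have "m * (v - u) \<le> g v - g u" and "q u - q v \<le> m * (v - u)"
    using g[of u v] q[of v u] by (auto simp: abs_le_iff)
  then show "g u + q u \<le> g v + q v" by linarith
qed

lemma tail_integral_le_of_separated:
  fixes u v :: "real \<Rightarrow> real"
  assumes u: "u integrable_on {a..b}" "\<And>t. t \<in> {a..b} \<Longrightarrow> 0 \<le> u t" "\<And>t. t \<in> {c..b} \<Longrightarrow> u t = 0"
    and v: "v integrable_on {a..b}" "\<And>t. t \<in> {a..b} \<Longrightarrow> 0 \<le> v t" "\<And>t. t \<in> {a..c} \<Longrightarrow> v t = 0"
    and eq: "integral {a..b} u = integral {a..b} v"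
    and z: "z \<in> {a..b}"
  shows "integral {z..b} u \<le> integral {z..b} v"
proof (cases "z \<le> c")
  case True
  have "integral {a..z} u + integral {z..b} u = integral {a..b} u"
    using u(1) z by (intro Henstock_Kurzweil_Integration.integral_combine) auto
  moreover have "0 \<le> integral {a..z} u"
    using z u by (intro integral_nonneg integrable_on_subinterval[OF u(1)]) auto
  moreover have "integral {a..z} v + integral {z..b} v = integral {a..b} v"
    using v(1) z by (intro Henstock_Kurzweil_Integration.integral_combine) auto
  moreover have "integral {a..z} v = integral {a..z} (\<lambda>_. 0)"
    using True v(3) by (intro integral_cong) auto
  ultimately show ?thesis using eq by simp
next
  case False
  have "integral {z..b} u = integral {z..b} (\<lambda>_. 0)"
    using False u(3) by (intro integral_cong) auto
  moreover have "0 \<le> integral {z..b} v"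
    using z v by (intro integral_nonneg integrable_on_subinterval[OF v(1)]) auto
  ultimately show ?thesis by simp
qed

lemma integral_add_scaled:
  fixes g h :: "'a::euclidean_space \<Rightarrow> real"
  assumes "g integrable_on S" "h integrable_on S"
  shows "integral S (\<lambda>t. g t + c * h t) = integral S g + c * integral S h"
  using Henstock_Kurzweil_Integration.integral_add[OF assms(1) integrable_on_mult_right[OF assms(2)]]
  by simp

lemma MPS_add_scaled:
  fixes a d f :: "real \<Rightarrow> real"
  assumes "0 \<le> tb" and a: "continuous_on {0..tb} a" and d: "continuous_on {0..tb} d" and f: "continuous_on {0..tb} f"
    and tails: "\<And>z. z \<in> {0..tb} \<Longrightarrow> integral {z..tb} (\<lambda>t. d t * f t) \<le> 0"
    and total: "integral {0..tb} (\<lambda>t. d t * f t) = 0"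
    and "0 \<le> \<epsilon>"
  shows "MPS tb f (\<lambda>t. a t + \<epsilon> * d t) a"
proof -
  have split: "integral {z..tb} (\<lambda>t. (a t + \<epsilon> * d t) * f t)
      = integral {z..tb} (\<lambda>t. a t * f t) + \<epsilon> * integral {z..tb} (\<lambda>t. d t * f t)"
    if "z \<in> {0..tb}" for z
  proof -
    have int: "(\<lambda>t. a t * f t) integrable_on {z..tb}" "(\<lambda>t. d t * f t) integrable_on {z..tb}"
      using that by (auto intro!: integrable_continuous_interval continuous_intros
          continuous_on_subset[OF a] continuous_on_subset[OF d] continuous_on_subset[OF f])
    then show ?thesis
      by (simp add: distrib_right mult.assoc integral_add_scaled)
  qed
  show ?thesis
    unfolding MPS_def
  proof (intro conjI ballI)
    fix z assume z: "z \<in> {0..tb}"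
    show "integral {z..tb} (\<lambda>t. (a t + \<epsilon> * d t) * f t) \<le> integral {z..tb} (\<lambda>t. a t * f t)"
      using split[OF z] mult_left_mono[OF tails[OF z] \<open>0 \<le> \<epsilon>\<close>] by simp
  next
    show "integral {0..tb} (\<lambda>t. (a t + \<epsilon> * d t) * f t) = integral {0..tb} (\<lambda>t. a t * f t)"
      using split[of 0] total \<open>0 \<le> tb\<close> by simp
  qed
qed

lemma status_fn_of_mono_on:
  fixes s :: "real \<Rightarrow> real"
  assumes "mono_on {0..tb} s" "0 \<le> s 0" "s tb \<le> 1"
  shows "status_fn tb s"
  unfolding status_fn_def
proof (rule conjI[OF assms(1)], intro ballI)
  fix t assume "t \<in> {0..tb}"
  then have "s 0 \<le> s t" "s t \<le> s tb"
    using assms(1) by (auto intro: mono_onD)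
  then show "0 \<le> s t \<and> s t \<le> 1"
    using assms by linarith
qed

locale type_distribution =
  fixes tb :: real and F f :: "real \<Rightarrow> real"
  assumes tb_pos: "0 < tb"
    and f_cont: "continuous_on {0..tb} f"
    and f_pos: "\<And>t. t \<in> {0..tb} \<Longrightarrow> 0 < f t"
    and F_integral: "\<And>t. t \<in> {0..tb} \<Longrightarrow> F t = integral {0..t} f"
    and F_total: "integral {0..tb} f = 1"
begin

abbreviation J :: "real \<Rightarrow> real" where
  "J \<equiv> virt_val F f"

lemma F_0: "F 0 = 0"
  using F_integral tb_pos by simp

lemma F_tb: "F tb = 1"
  using F_integral F_total tb_pos by simp

lemma F_diff:
  assumes "0 \<le> u" "u \<le> v" "v \<le> tb"
  shows "F v - F u = integral {u..v} f"
proof -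
  have "integral {0..u} f + integral {u..v} f = integral {0..v} f"
    using assms by (intro Henstock_Kurzweil_Integration.integral_combine
        integrable_continuous_interval continuous_on_subset[OF f_cont]) auto
  then show ?thesis
    using F_integral assms by simp
qed

lemma continuous_on_F: "continuous_on {0..tb} F"
  using continuous_on_eq[OF indefinite_integral_continuous_1[OF
        integrable_continuous_interval[OF f_cont]]] F_integral by auto

lemma continuous_on_J: "continuous_on {0..tb} J"
  unfolding virt_val_def using f_pos
  by (intro continuous_intros continuous_on_F f_cont) force

lemma F_growth:
  obtains m where "0 < m" "\<And>u v. 0 \<le> u \<Longrightarrow> u \<le> v \<Longrightarrow> v \<le> tb \<Longrightarrow> m * (v - u) \<le> F v - F u"
proof -
  obtain t0 where t0: "t0 \<in> {0..tb}" "\<And>t. t \<in> {0..tb} \<Longrightarrow> f t0 \<le> f t"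
    using continuous_attains_inf[OF compact_Icc _ f_cont] tb_pos by auto
  have growth: "f t0 * (v - u) \<le> F v - F u" if "0 \<le> u" "u \<le> v" "v \<le> tb" for u v
  proof -
    have "integral {u..v} (\<lambda>_. f t0) \<le> integral {u..v} f"
      using that t0 by (intro integral_le integrable_continuous_interval
          continuous_on_subset[OF f_cont]) auto
    then show ?thesis
      using F_diff[OF that] that by (simp add: mult.commute)
  qed
  show ?thesis
    by (rule that[OF f_pos[OF t0(1)] growth])
qed

lemma mono_on_F: "mono_on {0..tb} F"
proof (rule mono_onI)
  fix u v assume uv: "u \<in> {0..tb}" "v \<in> {0..tb}" "u \<le> v"
  have "0 \<le> integral {u..v} f"
    using uv by (intro integral_nonneg integrable_continuous_interval continuous_on_subset[OF f_cont])
      (auto intro!: less_imp_le[OF f_pos])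
  then show "F u \<le> F v"
    using F_diff[of u v] uv by simp
qed

lemma status_fn_F: "status_fn tb F"
  using status_fn_of_mono_on[OF mono_on_F] F_0 F_tb by simp

lemma R0_eq: "R0 tb F f s = integral {0..tb} (\<lambda>t. J t * (s t * f t))"
  unfolding R0_def by (simp add: mult_ac)

lemma R0_add_scaled:
  assumes a: "continuous_on {0..tb} a" and d: "continuous_on {0..tb} d"
  shows "R0 tb F f (\<lambda>t. a t + \<epsilon> * d t)
    = R0 tb F f a + \<epsilon> * integral {0..tb} (\<lambda>t. J t * (d t * f t))"
proof -
  have int: "(\<lambda>t. J t * (a t * f t)) integrable_on {0..tb}" "(\<lambda>t. J t * (d t * f t)) integrable_on {0..tb}"
    by (auto intro!: integrable_continuous_interval continuous_intros a d f_cont continuous_on_J)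
  have "R0 tb F f (\<lambda>t. a t + \<epsilon> * d t)
      = integral {0..tb} (\<lambda>t. J t * (a t * f t) + \<epsilon> * (J t * (d t * f t)))"
    unfolding R0_eq by (rule integral_cong) (simp add: algebra_simps)
  also have "\<dots> = R0 tb F f a + \<epsilon> * integral {0..tb} (\<lambda>t. J t * (d t * f t))"
    unfolding R0_eq using int by (rule integral_add_scaled)
  finally show ?thesis .
qed

theorem R0_le_of_MPS:
  assumes "mono_on {0..tb} J" "status_fn tb s" "status_fn tb s'" "MPS tb f s' s"
  shows "R0 tb F f s' \<le> R0 tb F f s"
proof -
  have "mono_on {0..tb} s" "mono_on {0..tb} s'"
    using assms(2,3) by (simp_all add: status_fn_def)
  then show ?thesis
    unfolding R0_eq using tb_pos by (intro MPS_weighted_integral_le[OF _ assms(1) _ _ f_cont assms(4)]) auto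
qed

definition tent_mass :: "real \<Rightarrow> real \<Rightarrow> real" where
  "tent_mass c \<delta> = integral {0..tb} (\<lambda>t. tent c \<delta> t * f t)"

definition bump :: "real \<Rightarrow> real \<Rightarrow> real \<Rightarrow> real" where
  "bump c \<delta> t = tent c \<delta> t / tent_mass c \<delta>"

lemma continuous_on_tent_times_f: "continuous_on {0..tb} (\<lambda>t. tent c \<delta> t * f t)"
  by (intro continuous_intros continuous_on_tent f_cont)

lemma tent_times_f_nonneg: "t \<in> {0..tb} \<Longrightarrow> 0 \<le> tent c \<delta> t * f t"
  using tent_nonneg f_pos by (simp add: less_imp_le)

lemma tent_mass_nonneg: "0 \<le> tent_mass c \<delta>"
  unfolding tent_mass_def using tent_times_f_nonneg
  by (intro integral_nonneg integrable_continuous_interval continuous_on_tent_times_f)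

lemma tent_mass_pos:
  assumes "c \<in> {0..tb}" "0 < \<delta>"
  shows "0 < tent_mass c \<delta>"
proof -
  have "tent c \<delta> c * f c \<noteq> 0"
    using assms(2) f_pos[OF assms(1)] by (simp add: tent_center)
  then have "tent_mass c \<delta> \<noteq> 0"
    unfolding tent_mass_def
    using integral_eq_0_iff[OF continuous_on_tent_times_f tb_pos] tent_times_f_nonneg assms(1) by blast
  then show ?thesis
    using tent_mass_nonneg by (simp add: order_less_le)
qed

lemma continuous_on_bump: "continuous_on S (bump c \<delta>)"
  unfolding bump_def divide_inverse by (intro continuous_intros continuous_on_tent)

lemma bump_nonneg: "0 \<le> bump c \<delta> t"
  unfolding bump_def using tent_nonneg tent_mass_nonneg by simp

lemma bump_eq_0: "\<delta> \<le> \<bar>t - c\<bar> \<Longrightarrow> bump c \<delta> t = 0"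
  unfolding bump_def by (simp add: tent_eq_0)

lemma bump_lipschitz: "\<bar>bump c \<delta> v - bump c \<delta> u\<bar> \<le> \<bar>v - u\<bar> / tent_mass c \<delta>"
  unfolding bump_def diff_divide_distrib[symmetric] abs_divide
  using tent_lipschitz tent_mass_nonneg by (simp add: divide_right_mono)

lemma integral_bump:
  assumes "c \<in> {0..tb}" "0 < \<delta>"
  shows "integral {0..tb} (\<lambda>t. bump c \<delta> t * f t) = 1"
  using tent_mass_pos[OF assms] unfolding bump_def tent_mass_def
  by (simp add: field_simps)

lemma bump_average_ge:
  assumes "c \<in> {0..tb}" "0 < \<delta>" and g: "continuous_on {0..tb} g"
    and near: "\<And>t. t \<in> {0..tb} \<Longrightarrow> dist t c < \<delta> \<Longrightarrow> a \<le> g t"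
  shows "a \<le> integral {0..tb} (\<lambda>t. g t * (bump c \<delta> t * f t))"
proof -
  have "a = integral {0..tb} (\<lambda>t. a * (bump c \<delta> t * f t))"
    using integral_bump[OF assms(1,2)] by simp
  also have "\<dots> \<le> integral {0..tb} (\<lambda>t. g t * (bump c \<delta> t * f t))"
  proof (intro integral_le integrable_continuous_interval continuous_intros continuous_on_bump f_cont g)
    fix t assume t: "t \<in> {0..tb}"
    have "0 \<le> bump c \<delta> t * f t"
      using bump_nonneg f_pos[OF t] by simp
    moreover have "bump c \<delta> t \<noteq> 0 \<Longrightarrow> a \<le> g t"
      using near[OF t] bump_eq_0[of \<delta> t c] by (force simp: dist_real_def)
    ultimately show "a * (bump c \<delta> t * f t) \<le> g t * (bump c \<delta> t * f t)"
      by (cases "bump c \<delta> t = 0") (auto intro: mult_right_mono)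
  qed
  finally show ?thesis .
qed

lemma bump_difference_spread:
  assumes x: "x \<in> {0..tb}" and y: "y \<in> {0..tb}" and "0 < \<delta>" "x + \<delta> \<le> y - \<delta>"
  shows "\<And>z. z \<in> {0..tb} \<Longrightarrow> integral {z..tb} (\<lambda>t. (bump x \<delta> t - bump y \<delta> t) * f t) \<le> 0"
    and "integral {0..tb} (\<lambda>t. (bump x \<delta> t - bump y \<delta> t) * f t) = 0"
proof -
  have int: "(\<lambda>t. bump c \<delta> t * f t) integrable_on {z..tb}" if "0 \<le> z" for c z
    using that by (intro integrable_continuous_interval continuous_intros continuous_on_bump
        continuous_on_subset[OF f_cont]) auto
  have diff: "integral {z..tb} (\<lambda>t. (bump x \<delta> t - bump y \<delta> t) * f t)
      = integral {z..tb} (\<lambda>t. bump x \<delta> t * f t) - integral {z..tb} (\<lambda>t. bump y \<delta> t * f t)"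
    if "0 \<le> z" for z
    unfolding left_diff_distrib using that by (intro integral_diff int)
  have masses: "integral {0..tb} (\<lambda>t. bump x \<delta> t * f t) = integral {0..tb} (\<lambda>t. bump y \<delta> t * f t)"
    using integral_bump[OF x \<open>0 < \<delta>\<close>] integral_bump[OF y \<open>0 < \<delta>\<close>] by simp
  show "integral {0..tb} (\<lambda>t. (bump x \<delta> t - bump y \<delta> t) * f t) = 0"
    using diff[of 0] masses by simp
  fix z assume z: "z \<in> {0..tb}"
  have "integral {z..tb} (\<lambda>t. bump x \<delta> t * f t) \<le> integral {z..tb} (\<lambda>t. bump y \<delta> t * f t)"
  proof (rule tail_integral_le_of_separated[OF _ _ _ _ _ _ masses z])
    show "(\<lambda>t. bump x \<delta> t * f t) integrable_on {0..tb}" "(\<lambda>t. bump y \<delta> t * f t) integrable_on {0..tb}"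
      using int by auto
    show "0 \<le> bump x \<delta> t * f t" "0 \<le> bump y \<delta> t * f t" if "t \<in> {0..tb}" for t
      using bump_nonneg f_pos[OF that] by simp_all
    show "bump x \<delta> t * f t = 0" if "t \<in> {x + \<delta>..tb}" for t
    proof -
      have "bump x \<delta> t = 0"
        using that by (intro bump_eq_0) auto
      then show ?thesis by simp
    qed
    show "bump y \<delta> t * f t = 0" if "t \<in> {0..x + \<delta>}" for t
    proof -
      have "bump y \<delta> t = 0"
        using that \<open>x + \<delta> \<le> y - \<delta>\<close> by (intro bump_eq_0) auto
      then show ?thesis by simp
    qed
  qed
  then show "integral {z..tb} (\<lambda>t. (bump x \<delta> t - bump y \<delta> t) * f t) \<le> 0"
    using diff[of z] z by simp
qed

lemma revenue_gain_of_drop: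
  assumes x: "x \<in> {0..tb}" and y: "y \<in> {0..tb}" and "x < y" and drop: "J y < J x"
  obtains \<delta> where "0 < \<delta>" "x + \<delta> \<le> y - \<delta>"
    "0 < integral {0..tb} (\<lambda>t. J t * ((bump x \<delta> t - bump y \<delta> t) * f t))"
proof -
  define e where "e = (J x - J y) / 3"
  have "0 < e" "J x - J y = 3 * e"
    using drop unfolding e_def by simp_all
  obtain d1 where "0 < d1" and d1: "\<And>t. t \<in> {0..tb} \<Longrightarrow> dist t x < d1 \<Longrightarrow> dist (J t) (J x) < e"
    using continuous_on_J x \<open>0 < e\<close> unfolding continuous_on_iff by meson
  obtain d2 where "0 < d2" and d2: "\<And>t. t \<in> {0..tb} \<Longrightarrow> dist t y < d2 \<Longrightarrow> dist (J t) (J y) < e"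
    using continuous_on_J y \<open>0 < e\<close> unfolding continuous_on_iff by meson
  define \<delta> where "\<delta> = min d1 (min d2 ((y - x) / 2))"
  have "0 < \<delta>"
    using \<open>0 < d1\<close> \<open>0 < d2\<close> \<open>x < y\<close> unfolding \<delta>_def by auto
  have "x + \<delta> \<le> y - \<delta>" "\<delta> \<le> d1" "\<delta> \<le> d2"
    unfolding \<delta>_def by (simp_all add: min_def field_simps)
  have avg_x: "J x - e \<le> integral {0..tb} (\<lambda>t. J t * (bump x \<delta> t * f t))"
  proof (rule bump_average_ge[OF x \<open>0 < \<delta>\<close> continuous_on_J])
    show "J x - e \<le> J t" if "t \<in> {0..tb}" "dist t x < \<delta>" for t
      using d1[OF that(1)] that(2) \<open>\<delta> \<le> d1\<close> by (simp add: dist_real_def)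
  qed
  have "- (J y + e) \<le> integral {0..tb} (\<lambda>t. - J t * (bump y \<delta> t * f t))"
  proof (rule bump_average_ge[OF y \<open>0 < \<delta>\<close> continuous_on_minus[OF continuous_on_J]])
    show "- (J y + e) \<le> - J t" if "t \<in> {0..tb}" "dist t y < \<delta>" for t
      using d2[OF that(1)] that(2) \<open>\<delta> \<le> d2\<close> by (simp add: dist_real_def)
  qed
  then have avg_y: "integral {0..tb} (\<lambda>t. J t * (bump y \<delta> t * f t)) \<le> J y + e"
    by simp
  have "integral {0..tb} (\<lambda>t. J t * ((bump x \<delta> t - bump y \<delta> t) * f t))
      = integral {0..tb} (\<lambda>t. J t * (bump x \<delta> t * f t)) - integral {0..tb} (\<lambda>t. J t * (bump y \<delta> t * f t))"
    unfolding left_diff_distrib right_diff_distrib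
    by (intro integral_diff integrable_continuous_interval continuous_intros continuous_on_J
        continuous_on_bump f_cont)
  then have "0 < integral {0..tb} (\<lambda>t. J t * ((bump x \<delta> t - bump y \<delta> t) * f t))"
    using avg_x avg_y \<open>0 < e\<close> \<open>J x - J y = 3 * e\<close> by linarith
  then show ?thesis
    by (rule that[OF \<open>0 < \<delta>\<close> \<open>x + \<delta> \<le> y - \<delta>\<close>])
qed

text \<open>The perturbation must be small enough that the growth of \<open>F\<close> (its density is bounded
  below) absorbs the Lipschitz constant of the bumps.\<close>
lemma bump_perturbation_in_S0:
  assumes x: "x \<in> {0..tb}" and y: "y \<in> {0..tb}" and "0 < \<delta>" and sep: "x + \<delta> \<le> y - \<delta>"
  obtains \<epsilon> where "0 < \<epsilon>" "(\<lambda>t. F t + \<epsilon> * (bump x \<delta> t - bump y \<delta> t)) \<in> S0 tb F f"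
proof -
  define d where "d t = bump x \<delta> t - bump y \<delta> t" for t
  define L where "L = 1 / tent_mass x \<delta> + 1 / tent_mass y \<delta>"
  obtain m where "0 < m" and growth: "\<And>u v. 0 \<le> u \<Longrightarrow> u \<le> v \<Longrightarrow> v \<le> tb \<Longrightarrow> m * (v - u) \<le> F v - F u"
    using F_growth by blast
  define \<epsilon> where "\<epsilon> = m / L"
  have "0 < L"
    unfolding L_def using tent_mass_pos[OF x \<open>0 < \<delta>\<close>] tent_mass_pos[OF y \<open>0 < \<delta>\<close>]
    by (intro add_pos_pos divide_pos_pos) auto
  then have "0 < \<epsilon>" "\<epsilon> * L = m"
    unfolding \<epsilon>_def using \<open>0 < m\<close> by auto
  have "\<bar>\<epsilon> * d v - \<epsilon> * d u\<bar> \<le> m * \<bar>v - u\<bar>" for u v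
  proof -
    have "L * \<bar>v - u\<bar> = \<bar>v - u\<bar> / tent_mass x \<delta> + \<bar>v - u\<bar> / tent_mass y \<delta>"
      unfolding L_def by (simp add: distrib_right)
    then have "\<bar>d v - d u\<bar> \<le> L * \<bar>v - u\<bar>"
      unfolding d_def using bump_lipschitz[of x \<delta> v u] bump_lipschitz[of y \<delta> v u] by linarith
    then have "\<epsilon> * \<bar>d v - d u\<bar> \<le> \<epsilon> * L * \<bar>v - u\<bar>"
      using \<open>0 < \<epsilon>\<close> by (simp add: mult.assoc)
    then show ?thesis
      using \<open>0 < \<epsilon>\<close> \<open>\<epsilon> * L = m\<close> by (simp add: abs_mult right_diff_distrib[symmetric])
  qed
  then have "mono_on {0..tb} (\<lambda>t. F t + \<epsilon> * d t)"
    by (intro mono_on_add_lipschitz[where m = m] growth)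
  moreover have "0 \<le> F 0 + \<epsilon> * d 0" "F tb + \<epsilon> * d tb \<le> 1"
    using \<open>0 < \<epsilon>\<close> sep x y bump_nonneg[of x \<delta>] bump_nonneg[of y \<delta>]
      bump_eq_0[of \<delta> 0 y] bump_eq_0[of \<delta> tb x]
    unfolding d_def by (auto simp: F_0 F_tb mult_nonneg_nonpos)
  moreover have "MPS tb f (\<lambda>t. F t + \<epsilon> * d t) F"
    unfolding d_def using bump_difference_spread[OF x y \<open>0 < \<delta>\<close> sep] \<open>0 < \<epsilon>\<close> tb_pos
    by (intro MPS_add_scaled continuous_on_F continuous_intros continuous_on_bump f_cont) auto
  ultimately have "(\<lambda>t. F t + \<epsilon> * d t) \<in> S0 tb F f"
    unfolding S0_def by (simp add: status_fn_of_mono_on)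
  then show ?thesis
    unfolding d_def by (rule that[OF \<open>0 < \<epsilon>\<close>])
qed

lemma exists_S0_revenue_above_F:
  assumes x: "x \<in> {0..tb}" and y: "y \<in> {0..tb}" and "x < y" and "J y < J x"
  shows "\<exists>s\<in>S0 tb F f. R0 tb F f F < R0 tb F f s"
proof -
  obtain \<delta> where "0 < \<delta>" and sep: "x + \<delta> \<le> y - \<delta>"
    and gain: "0 < integral {0..tb} (\<lambda>t. J t * ((bump x \<delta> t - bump y \<delta> t) * f t))"
    using revenue_gain_of_drop[OF assms] .
  obtain \<epsilon> where "0 < \<epsilon>" and in_S0: "(\<lambda>t. F t + \<epsilon> * (bump x \<delta> t - bump y \<delta> t)) \<in> S0 tb F f"
    using bump_perturbation_in_S0[OF x y \<open>0 < \<delta>\<close> sep] .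
  have "R0 tb F f (\<lambda>t. F t + \<epsilon> * (bump x \<delta> t - bump y \<delta> t))
      = R0 tb F f F + \<epsilon> * integral {0..tb} (\<lambda>t. J t * ((bump x \<delta> t - bump y \<delta> t) * f t))"
    by (intro R0_add_scaled continuous_on_F continuous_intros continuous_on_bump)
  then have "R0 tb F f F < R0 tb F f (\<lambda>t. F t + \<epsilon> * (bump x \<delta> t - bump y \<delta> t))"
    using gain \<open>0 < \<epsilon>\<close> by simp
  then show ?thesis
    using in_S0 by blast
qed

lemma mono_on_J_if_F_optimal:
  assumes "\<forall>s\<in>S0 tb F f. R0 tb F f s \<le> R0 tb F f F"
  shows "mono_on {0..tb} J"
proof (rule mono_onI, rule ccontr)
  fix x y assume x: "x \<in> {0..tb}" and y: "y \<in> {0..tb}" and "x \<le> y" "\<not> J x \<le> J y"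
  then have "x < y" "J y < J x"
    by (auto simp: order_le_less)
  then show False
    using exists_S0_revenue_above_F[OF x y] assms by force
qed

end

theorem mainTheorem11:
  fixes tb :: real and F f :: "real \<Rightarrow> real"
  assumes tb_pos: "0 < tb"
    and f_cont: "continuous_on {0..tb} f"
    and f_pos: "\<forall>t\<in>{0..tb}. 0 < f t"
    and F_def: "\<forall>t\<in>{0..tb}. F t = integral {0..t} f"
    and F_total: "integral {0..tb} f = 1"
  shows "(mono_on {0..tb} (virt_val F f) \<longleftrightarrow>
           (\<forall>s s'. status_fn tb s \<and> status_fn tb s' \<and> MPS tb f s' s \<longrightarrow>
                    R0 tb F f s' \<le> R0 tb F f s))
       \<and> (mono_on {0..tb} (virt_val F f) \<longleftrightarrow>
           (\<forall>s\<in>S0 tb F f. R0 tb F f s \<le> R0 tb F f F))"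
proof -
  interpret type_distribution tb F f
    using assms by unfold_locales auto
  have a_imp_b: "mono_on {0..tb} J \<Longrightarrow>
      \<forall>s s'. status_fn tb s \<and> status_fn tb s' \<and> MPS tb f s' s \<longrightarrow> R0 tb F f s' \<le> R0 tb F f s"
    using R0_le_of_MPS by blast
  have b_imp_c: "\<forall>s s'. status_fn tb s \<and> status_fn tb s' \<and> MPS tb f s' s \<longrightarrow> R0 tb F f s' \<le> R0 tb F f s
      \<Longrightarrow> \<forall>s\<in>S0 tb F f. R0 tb F f s \<le> R0 tb F f F"
    using status_fn_F unfolding S0_def by blast
  show ?thesis
    using a_imp_b b_imp_c mono_on_J_if_F_optimal by blast
qed

end
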